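(* Let $f_1,\dots,f_n$ be monotone non-identical linear functions. If a counterclockwise permutation $\sigma$ for them satisfies $f^\sigma\le f^{\sigma_1}$, $f^\sigma\le f^{\sigma_{n-1}}$ and $\theta(f_{\sigma(1)})\ne\theta(f^\sigma)$, then $\sigma$ is minimum.
   Context: A linear function is $f(x)=ax+b$; monotone means $a>0$; identical means $f(x)=x$. $\vec f=(b,1-a)^\top$ and $\theta(f)\in[0,2\pi)$ is its polar angle ($\bot$ if $\vec f=0$). For a permutation $\sigma$ of $[n]$, $f^\sigma=f_{\sigma(n)}\circ\cdots\circ f_{\sigma(1)}$; $\sigma$ is minimum if $f^\sigma\le f^\rho$ pointwise for all permutations $\rho$. $\sigma$ is counterclockwise if there is $k$ with $\theta(f_{\sigma(k)})\le\cdots\le\theta(f_{\sigma(n)})\le\theta(f_{\sigma(1)})\le\cdots\le\theta(f_{\sigma(k-1)})$. The $k$-shift is $\sigma_k(i)=\sigma(i+k)$ for $i\le n-k$, $\sigma_k(i)=\sigma(i+k-n)$ otherwise. *)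

theory Defs
  imports "HOL-Analysis.Analysis" "HOL-Combinatorics.Permutations"
begin

type_synonym linfun = "real \<times> real"

definition lapp :: "linfun \<Rightarrow> real \<Rightarrow> real" where
  "lapp f x = fst f * x + snd f"

definition lcomp :: "linfun \<Rightarrow> linfun \<Rightarrow> linfun" where
  "lcomp g f = (fst g * fst f, fst g * snd f + snd g)"

definition monotone_lin :: "linfun \<Rightarrow> bool" where
  "monotone_lin f \<longleftrightarrow> fst f > 0"

definition identical_lin :: "linfun \<Rightarrow> bool" where
  "identical_lin f \<longleftrightarrow> f = (1, 0)"

definition lvec :: "linfun \<Rightarrow> complex" where
  "lvec f = Complex (snd f) (1 - fst f)"

definition polar_angle :: "complex \<Rightarrow> real" where
  "polar_angle z = (if Arg z < 0 then Arg z + 2 * pi else Arg z)"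

text \<open>theta f; None plays the role of bottom (when the vector is 0).\<close>
definition theta :: "linfun \<Rightarrow> real option" where
  "theta f = (if lvec f = 0 then None else Some (polar_angle (lvec f)))"

text \<open>f^sigma = f_{sigma(n)} \<circ> ... \<circ> f_{sigma(1)} (identity for n = 0).\<close>
fun compose_perm :: "(nat \<Rightarrow> linfun) \<Rightarrow> (nat \<Rightarrow> nat) \<Rightarrow> nat \<Rightarrow> linfun" where
  "compose_perm f \<sigma> 0 = (1, 0)"
| "compose_perm f \<sigma> (Suc k) = lcomp (f (\<sigma> (Suc k))) (compose_perm f \<sigma> k)"

text \<open>In the counterclockwise condition all f_i are non-identical, so theta is the real polar angle.\<close>

definition kshift :: "nat \<Rightarrow> (nat \<Rightarrow> nat) \<Rightarrow> nat \<Rightarrow> nat \<Rightarrow> nat" where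
  "kshift n \<sigma> k i = (if i \<le> n - k then \<sigma> (i + k) else \<sigma> (i + k - n))"

definition counterclockwise :: "nat \<Rightarrow> (nat \<Rightarrow> linfun) \<Rightarrow> (nat \<Rightarrow> nat) \<Rightarrow> bool" where
  "counterclockwise n f \<sigma> \<longleftrightarrow>
     (\<exists>k\<in>{1..n}. \<forall>i j. 1 \<le> i \<longrightarrow> i \<le> j \<longrightarrow> j \<le> n \<longrightarrow>
        polar_angle (lvec (f (kshift n \<sigma> (k - 1) i))) \<le> polar_angle (lvec (f (kshift n \<sigma> (k - 1) j))))"

definition lin_le :: "linfun \<Rightarrow> linfun \<Rightarrow> bool" where
  "lin_le g h \<longleftrightarrow> (\<forall>x. lapp g x \<le> lapp h x)"

definition minimum_perm :: "nat \<Rightarrow> (nat \<Rightarrow> linfun) \<Rightarrow> (nat \<Rightarrow> nat) \<Rightarrow> bool" where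
  "minimum_perm n f \<sigma> \<longleftrightarrow>
     (\<forall>\<rho>. \<rho> permutes {1..n} \<longrightarrow> lin_le (compose_perm f \<sigma> n) (compose_perm f \<rho> n))"

end

theory Submission
  imports Defs
begin

text \<open>
All compositions of the f_i in any order have the same slope \<Prod> a_i, so only intercepts are
compared. The vectors (b, 1 - a) satisfy vec (g \<circ> h) = vec g + a_g vec h, so the vector of a
composition is a positive combination of the vectors of its factors, and exchanging two consecutive blocks X, Y changes the intercept
by the cross product of their vectors. With the angles of the f_i lifted to a sorted sequence
spanning at most one turn, the two shift conditions and the angle condition place the resultant
vector of \<sigma> so that every block decomposition has a nonnegative cross product; thus no rotation
of \<sigma> beats \<sigma>. An arbitrary order \<rho> is then matched element by element: inserting the next
element into a minimal rotation of the counterclockwise order of the elements seen so far costs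
no more than appending it, which is what \<rho> does.
\<close>

section \<open>Compositions of lists of linear functions\<close>

text \<open>comp_list f [x_1, ..., x_k] represents f x_k \<circ> ... \<circ> f x_1, like compose_perm.\<close>

definition comp_list :: "('a \<Rightarrow> linfun) \<Rightarrow> 'a list \<Rightarrow> linfun" where
  "comp_list f xs = foldl (\<lambda>g i. lcomp (f i) g) (1, 0) xs"

abbreviation lvec_list :: "('a \<Rightarrow> linfun) \<Rightarrow> 'a list \<Rightarrow> complex" where
  "lvec_list f xs \<equiv> lvec (comp_list f xs)"

definition cross :: "complex \<Rightarrow> complex \<Rightarrow> real" where
  "cross z w = Re z * Im w - Im z * Re w"

lemma cross_antisym: "cross z w = - cross w z"
  by (simp add: cross_def)

lemma cross_add_left: "cross (w + u) z = cross w z + cross u z"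
  and cross_add_right: "cross z (w + u) = cross z w + cross z u"
  and cross_scale_left: "cross (of_real c * w) z = c * cross w z"
  and cross_scale_right: "cross z (of_real c * w) = c * cross z w"
  by (simp_all add: cross_def algebra_simps)

lemma cross_self [simp]: "cross z z = 0"
  and cross_zero [simp]: "cross z 0 = 0" "cross 0 z = 0"
  by (simp_all add: cross_def)

lemma cross_rcis: "cross (rcis r a) (rcis s b) = r * s * sin (b - a)"
  by (simp add: cross_def rcis_def cis.ctr sin_diff algebra_simps)

lemma cross_rcis_nonneg: "0 \<le> b - a \<Longrightarrow> b - a \<le> pi \<Longrightarrow> 0 \<le> r \<Longrightarrow> 0 \<le> s \<Longrightarrow> cross (rcis r a) (rcis s b) \<ge> 0"
  unfolding cross_rcis using sin_ge_zero[of "b - a"] by simp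

lemma lcomp_assoc: "lcomp (lcomp g h) k = lcomp g (lcomp h k)"
  by (simp add: lcomp_def algebra_simps)

lemma lcomp_id_left [simp]: "lcomp (1, 0) g = g"
  and lcomp_id_right [simp]: "lcomp g (1, 0) = g"
  by (simp_all add: lcomp_def)

lemma foldl_lcomp: "foldl (\<lambda>g i. lcomp (f i) g) h xs = lcomp (comp_list f xs) h"
proof (induction xs arbitrary: h)
  case Nil
  then show ?case by (simp add: comp_list_def)
next
  case (Cons x xs)
  have "comp_list f (x # xs) = lcomp (comp_list f xs) (f x)"
    using Cons[of "lcomp (f x) (1, 0)"] by (simp add: comp_list_def)
  then show ?case
    using Cons[of "lcomp (f x) h"] by (simp add: lcomp_assoc)
qed

lemma comp_list_Nil [simp]: "comp_list f [] = (1, 0)"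
  by (simp add: comp_list_def)

lemma comp_list_single [simp]: "comp_list f [x] = f x"
  by (simp add: comp_list_def)

lemma comp_list_append: "comp_list f (xs @ ys) = lcomp (comp_list f ys) (comp_list f xs)"
proof -
  have "comp_list f (xs @ ys) = foldl (\<lambda>g i. lcomp (f i) g) (comp_list f xs) ys"
    by (simp add: comp_list_def)
  then show ?thesis by (simp only: foldl_lcomp)
qed

lemma comp_list_snoc: "comp_list f (xs @ [x]) = lcomp (f x) (comp_list f xs)"
  by (simp only: comp_list_append comp_list_single)

lemma snd_comp_list_snoc:
  "snd (comp_list f (xs @ [x])) = fst (f x) * snd (comp_list f xs) + snd (f x)"
  by (simp add: comp_list_snoc lcomp_def)

lemma fst_comp_list: "fst (comp_list f xs) = (\<Prod>x\<leftarrow>xs. fst (f x))"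
proof (induction xs rule: rev_induct)
  case (snoc x xs)
  then show ?case by (simp add: comp_list_snoc lcomp_def mult.commute)
qed simp

lemma fst_comp_list_pos: "(\<And>x. x \<in> set xs \<Longrightarrow> fst (f x) > 0) \<Longrightarrow> fst (comp_list f xs) > 0"
  unfolding fst_comp_list by (induction xs) auto

lemma fst_comp_list_mset_eq: "mset xs = mset ys \<Longrightarrow> fst (comp_list f xs) = fst (comp_list f ys)"
  unfolding fst_comp_list by (metis mset_map prod_mset_prod_list)

lemma snd_comp_list_prefix_diff:
  "fst (comp_list f ys) = fst (comp_list f zs) \<Longrightarrow>
   snd (comp_list f (xs @ ys)) - snd (comp_list f (xs @ zs))
     = snd (comp_list f ys) - snd (comp_list f zs)"
  by (simp add: comp_list_append lcomp_def algebra_simps)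

lemma lvec_id [simp]: "lvec (1, 0) = 0"
  by (simp add: lvec_def complex_eq_iff)

lemma lvec_eq_0_iff: "lvec g = 0 \<longleftrightarrow> identical_lin g"
  by (auto simp: lvec_def identical_lin_def complex_eq_iff prod_eq_iff)

lemma lvec_lcomp: "lvec (lcomp g h) = lvec g + of_real (fst g) * lvec h"
  by (simp add: lvec_def lcomp_def complex_eq_iff algebra_simps)

lemma lvec_comp_list_append:
  "lvec_list f (xs @ ys) = lvec_list f ys + of_real (fst (comp_list f ys)) * lvec_list f xs"
  by (simp add: comp_list_append lvec_lcomp)

lemma snd_lcomp_commute_diff: "snd (lcomp g h) - snd (lcomp h g) = cross (lvec g) (lvec h)"
  by (simp add: lcomp_def cross_def lvec_def algebra_simps)

lemma snd_comp_list_swap_diff: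
  "snd (comp_list f (xs @ ys)) - snd (comp_list f (ys @ xs))
    = cross (lvec_list f ys) (lvec_list f xs)"
  by (simp add: comp_list_append snd_lcomp_commute_diff)

lemma mset_rotate: "mset (rotate k xs) = mset xs"
  by (metis append_take_drop_id mset_append rotate_drop_take union_commute)

lemma comp_list_rotate_eq_of_snd_eq:
  "snd (comp_list f (rotate a xs)) = snd (comp_list f (rotate b xs)) \<Longrightarrow>
   comp_list f (rotate a xs) = comp_list f (rotate b xs)"
  using fst_comp_list_mset_eq[of "rotate a xs" "rotate b xs" f]
  by (simp add: mset_rotate prod_eq_iff)

lemma snd_comp_list_insert_le:
  assumes "cross (lvec (f e)) (lvec_list f H) \<ge> 0"
  shows "snd (comp_list f (G @ e # H)) \<le> snd (comp_list f (G @ H @ [e]))"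
proof -
  have "fst (comp_list f ([e] @ H)) = fst (comp_list f (H @ [e]))"
    by (rule fst_comp_list_mset_eq) simp
  then have "snd (comp_list f (G @ [e] @ H)) - snd (comp_list f (G @ H @ [e]))
      = snd (comp_list f ([e] @ H)) - snd (comp_list f (H @ [e]))"
    by (rule snd_comp_list_prefix_diff)
  moreover have "snd (comp_list f (H @ [e])) - snd (comp_list f ([e] @ H))
      = cross (lvec (f e)) (lvec_list f H)"
    using snd_comp_list_swap_diff[of f H "[e]"] by simp
  ultimately show ?thesis using assms by simp
qed

lemma snd_comp_list_rotate1_diff:
  assumes "t \<noteq> []"
  shows "snd (comp_list f (rotate 1 t)) - snd (comp_list f t)
    = cross (lvec (f (hd t))) (lvec_list f t)"
proof -
  obtain x r where t: "t = [x] @ r" using assms by (cases t) auto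
  have "snd (comp_list f (r @ [x])) - snd (comp_list f ([x] @ r))
      = cross (lvec (f x)) (lvec_list f r)"
    using snd_comp_list_swap_diff[of f r "[x]"] by simp
  moreover have "lvec_list f t = lvec_list f r + of_real (fst (comp_list f r)) * lvec (f x)"
    using t lvec_comp_list_append[of f "[x]" r] by simp
  ultimately show ?thesis
    using t by (simp add: cross_add_right cross_scale_right)
qed

lemma snd_comp_list_rotate_last_diff:
  assumes "t \<noteq> []"
  shows "fst (f (last t)) * (snd (comp_list f (rotate (length t - 1) t)) - snd (comp_list f t))
    = cross (lvec_list f t) (lvec (f (last t)))"
proof -
  obtain y r where t: "t = r @ [y]" using assms by (metis append_butlast_last_id)
  have "rotate (length t - 1) t = [y] @ r" using t by (simp add: rotate_append)
  moreover have "snd (comp_list f ([y] @ r)) - snd (comp_list f (r @ [y]))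
      = cross (lvec_list f r) (lvec (f y))"
    using snd_comp_list_swap_diff[of f "[y]" r] by simp
  moreover have "lvec_list f t = lvec (f y) + of_real (fst (f y)) * lvec_list f r"
    using t lvec_comp_list_append[of f r "[y]"] by simp
  ultimately show ?thesis
    using t by (simp add: cross_add_left cross_scale_left)
qed

lemma cross_hd_nonneg_of_le_rotate1:
  "t \<noteq> [] \<Longrightarrow> snd (comp_list f t) \<le> snd (comp_list f (rotate 1 t)) \<Longrightarrow>
   cross (lvec (f (hd t))) (lvec_list f t) \<ge> 0"
  using snd_comp_list_rotate1_diff[of t f] by simp

lemma cross_last_nonneg_of_le_rotate_last:
  assumes "t \<noteq> []" "fst (f (last t)) > 0"
    and "snd (comp_list f t) \<le> snd (comp_list f (rotate (length t - 1) t))"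
  shows "cross (lvec_list f t) (lvec (f (last t))) \<ge> 0"
  using snd_comp_list_rotate_last_diff[OF assms(1), of f] assms(2,3)
  by (metis diff_ge_0_iff_ge mult_nonneg_nonneg less_imp_le)

lemma cross_comp_list_nonneg_right:
  assumes "\<And>x. x \<in> set xs \<Longrightarrow> fst (f x) > 0"
    and "\<And>x. x \<in> set xs \<Longrightarrow> cross u (lvec (f x)) \<ge> 0"
  shows "cross u (lvec_list f xs) \<ge> 0"
  using assms
proof (induction xs rule: rev_induct)
  case (snoc x xs)
  have "lvec_list f (xs @ [x]) = lvec (f x) + of_real (fst (f x)) * lvec_list f xs"
    by (simp add: comp_list_snoc lvec_lcomp)
  moreover have "cross u (lvec_list f xs) \<ge> 0" "fst (f x) > 0" "cross u (lvec (f x)) \<ge> 0"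
    using snoc by auto
  ultimately show ?case
    by (simp add: cross_add_right cross_scale_right)
qed simp

lemma cross_comp_list_nonneg_left:
  assumes "\<And>x. x \<in> set xs \<Longrightarrow> fst (f x) > 0"
    and "\<And>x. x \<in> set xs \<Longrightarrow> cross (lvec (f x)) u \<ge> 0"
  shows "cross (lvec_list f xs) u \<ge> 0"
proof -
  have "cross (-u) (lvec_list f xs) \<ge> 0"
    using assms by (intro cross_comp_list_nonneg_right) (auto simp: cross_def algebra_simps)
  then show ?thesis by (simp add: cross_def mult.commute)
qed

lemma lvec_comp_list_parallel:
  assumes "\<And>x. x \<in> set xs \<Longrightarrow> lvec (f x) = rcis (cmod (lvec (f x))) \<beta> \<and> fst (f x) > 0"
  shows "\<exists>s. lvec_list f xs = rcis s \<beta>"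
  using assms
proof (induction xs rule: rev_induct)
  case Nil
  then show ?case by (intro exI[of _ 0]) simp
next
  case (snoc x xs)
  then obtain s where s: "lvec_list f xs = rcis s \<beta>" by auto
  have "lvec_list f (xs @ [x]) = lvec (f x) + of_real (fst (f x)) * lvec_list f xs"
    by (simp add: comp_list_snoc lvec_lcomp)
  also have "\<dots> = rcis (cmod (lvec (f x)) + fst (f x) * s) \<beta>"
    using snoc.prems[of x] s by (simp add: rcis_def algebra_simps)
  finally show ?case by blast
qed

section \<open>Polar angles and their lifts\<close>

lemma polar_angle_bounds: "0 \<le> polar_angle z" "polar_angle z < 2 * pi"
  using Arg_bounded[of z] by (auto simp: polar_angle_def)

lemma rcis_add_2pi: "rcis r (a + 2 * pi) = rcis r a"
  by (simp add: rcis_def cis_mult[symmetric])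

lemma rcis_cmod_polar_angle: "rcis (cmod z) (polar_angle z) = z"
  by (simp add: polar_angle_def rcis_add_2pi rcis_cmod_Arg)

definition ang :: "('a \<Rightarrow> linfun) \<Rightarrow> 'a \<Rightarrow> real" where
  "ang f x = polar_angle (lvec (f x))"

definition cyclically_sorted :: "('a \<Rightarrow> linfun) \<Rightarrow> 'a list \<Rightarrow> bool" where
  "cyclically_sorted f xs \<longleftrightarrow> (\<exists>k. sorted (map (ang f) (rotate k xs)))"

definition angle_lift :: "('a \<Rightarrow> linfun) \<Rightarrow> ('a \<Rightarrow> real) \<Rightarrow> 'a set \<Rightarrow> bool" where
  "angle_lift f \<psi> A \<longleftrightarrow> (\<forall>x\<in>A. fst (f x) > 0 \<and> lvec (f x) \<noteq> 0 \<and>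
      (\<psi> x = ang f x \<or> \<psi> x = ang f x + 2 * pi))"

lemma lvec_eq_rcis_ang: "lvec (f x) = rcis (cmod (lvec (f x))) (ang f x)"
  by (simp add: ang_def rcis_cmod_polar_angle)

lemma angle_liftD:
  assumes "angle_lift f \<psi> A" "x \<in> A"
  shows "fst (f x) > 0" "lvec (f x) \<noteq> 0" "\<psi> x = ang f x \<or> \<psi> x = ang f x + 2 * pi"
    and "lvec (f x) = rcis (cmod (lvec (f x))) (\<psi> x)"
  using assms lvec_eq_rcis_ang[of f x] rcis_add_2pi by (auto simp: angle_lift_def)

lemma angle_lift_subset: "angle_lift f \<psi> A \<Longrightarrow> B \<subseteq> A \<Longrightarrow> angle_lift f \<psi> B"
  by (auto simp: angle_lift_def)

lemma cross_rcis_comp_list_nonneg: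
  assumes "angle_lift f \<psi> (set xs)" "r \<ge> 0" "\<And>x. x \<in> set xs \<Longrightarrow> \<alpha> \<le> \<psi> x \<and> \<psi> x \<le> \<alpha> + pi"
  shows "cross (rcis r \<alpha>) (lvec_list f xs) \<ge> 0"
proof (rule cross_comp_list_nonneg_right)
  fix x assume "x \<in> set xs"
  then have "lvec (f x) = rcis (cmod (lvec (f x))) (\<psi> x)" "\<alpha> \<le> \<psi> x \<and> \<psi> x \<le> \<alpha> + pi"
    using angle_liftD(4)[OF assms(1)] assms(3) by auto
  then show "cross (rcis r \<alpha>) (lvec (f x)) \<ge> 0"
    using assms(2) by (subst \<open>lvec (f x) = _\<close>, intro cross_rcis_nonneg) auto
  show "fst (f x) > 0" using angle_liftD(1)[OF assms(1)] \<open>x \<in> set xs\<close> .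
qed

lemma cross_comp_list_rcis_nonneg:
  assumes "angle_lift f \<psi> (set xs)" "r \<ge> 0" "\<And>x. x \<in> set xs \<Longrightarrow> \<alpha> - pi \<le> \<psi> x \<and> \<psi> x \<le> \<alpha>"
  shows "cross (lvec_list f xs) (rcis r \<alpha>) \<ge> 0"
proof (rule cross_comp_list_nonneg_left)
  fix x assume "x \<in> set xs"
  then have "lvec (f x) = rcis (cmod (lvec (f x))) (\<psi> x)" "\<alpha> - pi \<le> \<psi> x \<and> \<psi> x \<le> \<alpha>"
    using angle_liftD(4)[OF assms(1)] assms(3) by auto
  then show "cross (lvec (f x)) (rcis r \<alpha>) \<ge> 0"
    using assms(2) by (subst \<open>lvec (f x) = _\<close>, intro cross_rcis_nonneg) auto
  show "fst (f x) > 0" using angle_liftD(1)[OF assms(1)] \<open>x \<in> set xs\<close> .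
qed

lemma ex_sorted_lift_of_sorted_rotation:
  assumes "distinct xs" "sorted (map p (rotate k xs))" "\<And>x. x \<in> set xs \<Longrightarrow> 0 \<le> p x \<and> p x < 2 * pi"
  shows "\<exists>\<psi>. (\<forall>x\<in>set xs. \<psi> x = p x \<or> \<psi> x = p x + 2 * pi) \<and> sorted (map \<psi> xs)
          \<and> (xs \<noteq> [] \<longrightarrow> \<psi> (last xs) \<le> \<psi> (hd xs) + 2 * pi)"
proof -
  define m where "m = k mod length xs"
  define A where "A = take m xs"
  define B where "B = drop m xs"
  have xsAB: "xs = A @ B" by (simp add: A_def B_def)
  have sBA: "sorted (map p B @ map p A)"
    using assms(2) by (simp add: A_def B_def m_def rotate_drop_take)
  have disj: "set A \<inter> set B = {}" using assms(1) xsAB by (metis distinct_append)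
  define \<psi> where "\<psi> x = (if x \<in> set B then p x + 2 * pi else p x)" for x
  have mA: "map \<psi> A = map p A" using disj by (auto simp: \<psi>_def)
  have mB: "map \<psi> B = map (\<lambda>x. p x + 2 * pi) B" by (auto simp: \<psi>_def)
  have sA: "sorted (map p A)" and sB: "sorted (map p B)"
    using sBA by (simp_all add: sorted_append)
  have sB2: "sorted (map (\<lambda>x. p x + 2 * pi) B)"
    using sB by (simp add: sorted_iff_nth_mono)
  have cross_AB: "p a \<le> p b + 2 * pi" if "a \<in> set A" "b \<in> set B" for a b
    using that assms(3)[of a] assms(3)[of b] xsAB by fastforce
  have sorted: "sorted (map \<psi> xs)"
    unfolding xsAB map_append mA mB sorted_append using sA sB2 cross_AB by auto
  have BA: "\<forall>a\<in>set A. \<forall>b\<in>set B. p b \<le> p a" using sBA by (simp add: sorted_append)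
  have "\<psi> (last xs) \<le> \<psi> (hd xs) + 2 * pi" if ne: "xs \<noteq> []"
  proof (cases "A = [] \<or> B = []")
    case True
    then show ?thesis
      using assms(3)[of "last xs"] assms(3)[of "hd xs"] ne xsAB disj
      by (auto simp: \<psi>_def)
  next
    case False
    then have "hd xs = hd A" "hd A \<in> set A" "last xs = last B" "last B \<in> set B"
      using xsAB by auto
    then show ?thesis using BA disj by (auto simp: \<psi>_def)
  qed
  then show ?thesis
    using sorted by (intro exI[of _ \<psi>]) (auto simp: \<psi>_def)
qed

lemma ex_angle_lift_of_cyclically_sorted:
  assumes "distinct xs" "cyclically_sorted f xs" "\<And>x. x \<in> set xs \<Longrightarrow> fst (f x) > 0 \<and> lvec (f x) \<noteq> 0"
  shows "\<exists>\<psi>. angle_lift f \<psi> (set xs) \<and> sorted (map \<psi> xs)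
    \<and> (xs \<noteq> [] \<longrightarrow> \<psi> (last xs) \<le> \<psi> (hd xs) + 2 * pi)"
proof -
  obtain k where "sorted (map (ang f) (rotate k xs))"
    using assms(2) by (auto simp: cyclically_sorted_def)
  from ex_sorted_lift_of_sorted_rotation[OF assms(1) this] obtain \<psi>
    where "\<forall>x\<in>set xs. \<psi> x = ang f x \<or> \<psi> x = ang f x + 2 * pi" "sorted (map \<psi> xs)"
      "xs \<noteq> [] \<longrightarrow> \<psi> (last xs) \<le> \<psi> (hd xs) + 2 * pi"
    using polar_angle_bounds by (auto simp: ang_def)
  then show ?thesis
    using assms(3) by (auto simp: angle_lift_def)
qed

lemma sorted_hd_le_le_last:
  assumes "sorted (map \<psi> xs)" "x \<in> set xs"
  shows "\<psi> (hd xs) \<le> \<psi> x" "\<psi> x \<le> \<psi> (last xs)"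
proof -
  obtain ys zs where xs: "xs = ys @ x # zs" using assms(2) by (metis split_list)
  show "\<psi> (hd xs) \<le> \<psi> x"
    using assms(1) unfolding xs by (cases ys) (auto simp: sorted_append)
  show "\<psi> x \<le> \<psi> (last xs)"
    using assms(1) unfolding xs by (cases zs rule: rev_cases) (auto simp: sorted_append)
qed

lemma ex_rcis_angle_above:
  assumes v: "v = rcis r \<psi>" "r > 0" "\<psi> = polar_angle v \<or> \<psi> = polar_angle v + 2 * pi"
    and V: "V \<noteq> 0" "polar_angle v \<noteq> polar_angle V" "cross v V \<ge> 0"
  shows "\<exists>\<phi>. V = rcis (cmod V) \<phi> \<and> \<psi> < \<phi> \<and> \<phi> \<le> \<psi> + pi"
proof -
  define d where "d = polar_angle V - \<psi>"
  define d' where "d' = (if d > 0 then d else if d > - 2 * pi then d + 2 * pi else d + 4 * pi)"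
  have "0 < d'" "d' < 2 * pi"
    using v(3) V(2) polar_angle_bounds[of v] polar_angle_bounds[of V]
    unfolding d'_def d_def by auto
  define \<phi> where "\<phi> = \<psi> + d'"
  have "\<phi> = polar_angle V \<or> \<phi> = polar_angle V + 2 * pi \<or> \<phi> = (polar_angle V + 2 * pi) + 2 * pi"
    unfolding \<phi>_def d'_def d_def by auto
  then have V_eq: "V = rcis (cmod V) \<phi>"
    using rcis_add_2pi rcis_cmod_polar_angle by metis
  have "cross v V = r * cmod V * sin d'"
    by (subst V_eq) (simp add: v(1) cross_rcis \<phi>_def)
  moreover have "r * cmod V > 0" using V(1) v(2) by simp
  ultimately have "sin d' \<ge> 0"
    using V(3) by (metis zero_le_mult_iff linorder_not_le)
  then have "d' \<le> pi"
    using sin_lt_zero[of d'] \<open>d' < 2 * pi\<close> by force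
  then show ?thesis
    using V_eq \<open>0 < d'\<close> by (intro exI[of _ \<phi>]) (auto simp: \<phi>_def)
qed

lemma angle_le_add_pi_of_cross_nonneg:
  assumes "cross (rcis r \<phi>) (rcis s \<psi>) \<ge> 0" "r > 0" "s > 0" "\<phi> \<le> \<psi>" "\<psi> < \<phi> + 2 * pi"
  shows "\<psi> \<le> \<phi> + pi"
proof (rule ccontr)
  assume "\<not> ?thesis"
  then have "sin (\<psi> - \<phi>) < 0" using sin_lt_zero[of "\<psi> - \<phi>"] assms(5) by auto
  then have "r * s * sin (\<psi> - \<phi>) < 0"
    using assms(2,3) by (simp add: mult_pos_neg)
  then show False
    using assms(1) by (simp add: cross_rcis)
qed

lemma resultant_angle_bounds:
  assumes ne: "Z \<noteq> []" and sorted: "sorted (map \<psi> Z)" and span: "\<psi> (last Z) \<le> \<psi> (hd Z) + 2 * pi"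
    and lift: "angle_lift f \<psi> (set Z)" and V: "V \<noteq> 0" "ang f (hd Z) \<noteq> polar_angle V"
    and hd: "cross (lvec (f (hd Z))) V \<ge> 0" and last: "cross V (lvec (f (last Z))) \<ge> 0"
  shows "\<exists>\<phi>. V = rcis (cmod V) \<phi> \<and> \<psi> (hd Z) < \<phi> \<and> \<phi> \<le> \<psi> (hd Z) + pi \<and> \<psi> (last Z) \<le> \<phi> + pi"
proof -
  have hd_in: "hd Z \<in> set Z" and last_in: "last Z \<in> set Z" using ne by auto
  obtain \<phi> where \<phi>: "V = rcis (cmod V) \<phi>" "\<psi> (hd Z) < \<phi>" "\<phi> \<le> \<psi> (hd Z) + pi"
    using ex_rcis_angle_above[OF angle_liftD(4)[OF lift hd_in] _ _ V(1) _ hd]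
      angle_liftD(2,3)[OF lift hd_in] V(2) by (auto simp: ang_def)
  have "\<psi> (last Z) \<le> \<phi> + pi"
  proof (cases "\<psi> (last Z) < \<phi>")
    case False
    have "cross (rcis (cmod V) \<phi>) (rcis (cmod (lvec (f (last Z)))) (\<psi> (last Z))) \<ge> 0"
      using last \<phi>(1) angle_liftD(4)[OF lift last_in] by simp
    then show ?thesis
      using False \<phi>(2) span V(1) angle_liftD(2)[OF lift last_in]
      by (intro angle_le_add_pi_of_cross_nonneg) auto
  qed (use pi_gt_zero in linarith)
  then show ?thesis using \<phi> by blast
qed

lemma cross_comp_list_split_nonneg:
  assumes Z: "Z = P @ S" "Z \<noteq> []" and sorted: "sorted (map \<psi> Z)"
    and span: "\<psi> (last Z) \<le> \<psi> (hd Z) + 2 * pi" and lift: "angle_lift f \<psi> (set Z)"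
    and hd: "cross (lvec (f (hd Z))) (lvec_list f Z) \<ge> 0"
    and last: "cross (lvec_list f Z) (lvec (f (last Z))) \<ge> 0"
    and gap: "lvec_list f Z = 0 \<or> ang f (hd Z) \<noteq> polar_angle (lvec_list f Z)"
  shows "cross (lvec_list f P) (lvec_list f S) \<ge> 0"
proof -
  define V where "V = lvec_list f Z"
  define a where "a = fst (comp_list f S)"
  have "a > 0"
    unfolding a_def using angle_liftD(1)[OF lift] Z(1) by (intro fst_comp_list_pos) auto
  have V_eq: "V = lvec_list f S + of_real a * lvec_list f P"
    by (simp add: V_def Z(1) lvec_comp_list_append a_def)
  have crossP: "cross (lvec_list f P) V = cross (lvec_list f P) (lvec_list f S)"
    by (simp add: V_eq cross_add_right cross_scale_right)
  have crossS: "cross V (lvec_list f S) = a * cross (lvec_list f P) (lvec_list f S)"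
    by (simp add: V_eq cross_add_left cross_scale_left)
  have bounds: "\<psi> (hd Z) \<le> \<psi> x" "\<psi> x \<le> \<psi> (last Z)" if "x \<in> set Z" for x
    using sorted_hd_le_le_last[OF sorted that] by auto
  show ?thesis
  proof (cases "V = 0")
    case True
    then show ?thesis using crossP by simp
  next
    case False
    obtain \<phi> where \<phi>: "V = rcis (cmod V) \<phi>" "\<psi> (hd Z) < \<phi>" "\<phi> \<le> \<psi> (hd Z) + pi" "\<psi> (last Z) \<le> \<phi> + pi"
      using resultant_angle_bounds[OF Z(2) sorted span lift False] gap hd last False
      by (auto simp: V_def)
    show ?thesis
    proof (cases "\<forall>p\<in>set P. \<psi> p \<le> \<phi>")
      case True
      have "cross (lvec_list f P) (rcis (cmod V) \<phi>) \<ge> 0"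
        using True bounds \<phi>(3) Z(1) angle_lift_subset[OF lift]
        by (intro cross_comp_list_rcis_nonneg[of f \<psi>]) force+
      then show ?thesis using crossP \<phi>(1) by simp
    next
      case False
      then obtain p where p: "p \<in> set P" "\<phi> < \<psi> p" by force
      have "\<psi> p \<le> \<psi> x" if "x \<in> set S" for x
        using sorted Z(1) p(1) that by (auto simp: sorted_append)
      then have "cross (rcis (cmod V) \<phi>) (lvec_list f S) \<ge> 0"
        using p(2) bounds \<phi>(4) Z(1) angle_lift_subset[OF lift]
        by (intro cross_rcis_comp_list_nonneg[of f \<psi>]) force+
      then show ?thesis using crossS \<phi>(1) \<open>a > 0\<close> by (simp add: zero_le_mult_iff)
    qed
  qed
qed

lemma insert_halfturn_cases:
  assumes Z: "Z = G @ e # H" and sorted: "sorted (map \<psi> Z)"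
    and span: "\<psi> (last Z) \<le> \<psi> (hd Z) + 2 * pi" and lift: "angle_lift f \<psi> (set Z)"
    and hd: "cross (lvec (f (hd Z))) (lvec_list f (G @ H)) \<ge> 0"
    and last: "cross (lvec_list f (G @ H)) (lvec (f (last Z))) \<ge> 0"
    and gap: "lvec_list f (G @ H) = 0 \<or> ang f (hd Z) \<noteq> polar_angle (lvec_list f (G @ H))"
  shows "(\<forall>h\<in>set H. \<psi> h \<le> \<psi> e + pi)
    \<or> ((\<forall>g\<in>set G. \<psi> e - pi \<le> \<psi> g) \<and> cross (lvec (f e)) (lvec_list f (G @ H)) \<ge> 0)"
proof -
  define V where "V = lvec_list f (G @ H)"
  have e_in: "e \<in> set Z" using Z by simp
  have bounds: "\<psi> (hd Z) \<le> \<psi> x" "\<psi> x \<le> \<psi> (last Z)" if "x \<in> set Z" for x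
    using sorted_hd_le_le_last[OF sorted that] by auto
  show ?thesis
  proof (cases "V = 0")
    case True
    show ?thesis
    proof (cases "\<forall>h\<in>set H. \<psi> h \<le> \<psi> e + pi")
      case False
      then obtain h where h: "h \<in> set H" "\<psi> e + pi < \<psi> h" by (auto simp: not_le)
      have "\<psi> e - pi \<le> \<psi> g" if "g \<in> set G" for g
        using bounds(1)[of g] bounds(2)[of h] span that h Z by simp
      then show ?thesis using True by (simp add: V_def)
    qed simp
  next
    case False
    obtain \<phi> where \<phi>: "V = rcis (cmod V) \<phi>" "\<psi> (hd Z) < \<phi>" "\<phi> \<le> \<psi> (hd Z) + pi" "\<psi> (last Z) \<le> \<phi> + pi"
      using resultant_angle_bounds[OF _ sorted span lift False] Z gap hd last False
      by (auto simp: V_def)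
    show ?thesis
    proof (cases "\<phi> \<le> \<psi> e")
      case True
      have "\<psi> h \<le> \<psi> e + pi" if "h \<in> set H" for h
        using bounds(2)[of h] that Z \<phi>(4) True by simp
      then show ?thesis by blast
    next
      case False
      have "\<psi> e - pi \<le> \<psi> g" if "g \<in> set G" for g
        using bounds(1)[of g] that Z \<phi>(3) False by simp
      moreover have "cross (lvec (f e)) V \<ge> 0"
        using False \<phi>(3) bounds(1)[OF e_in]
        by (subst angle_liftD(4)[OF lift e_in], subst \<phi>(1), intro cross_rcis_nonneg) auto
      ultimately show ?thesis by (auto simp: V_def)
    qed
  qed
qed

lemma cross_insert_suffix_nonneg:
  assumes Z: "Z = G @ e # H" and sorted: "sorted (map \<psi> Z)"
    and span: "\<psi> (last Z) \<le> \<psi> (hd Z) + 2 * pi" and lift: "angle_lift f \<psi> (set Z)"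
    and hd: "cross (lvec (f (hd Z))) (lvec_list f (G @ H)) \<ge> 0"
    and last: "cross (lvec_list f (G @ H)) (lvec (f (last Z))) \<ge> 0"
    and gap: "lvec_list f (G @ H) = 0 \<or> ang f (hd Z) \<noteq> polar_angle (lvec_list f (G @ H))"
  shows "cross (lvec (f e)) (lvec_list f H) \<ge> 0"
proof -
  define a where "a = fst (comp_list f H)"
  have "a > 0"
    unfolding a_def using angle_liftD(1)[OF lift] Z by (intro fst_comp_list_pos) auto
  have cross_eq: "cross (lvec (f e)) (lvec_list f H)
      = cross (lvec (f e)) (lvec_list f (G @ H)) - a * cross (lvec (f e)) (lvec_list f G)"
    by (simp add: a_def lvec_comp_list_append cross_add_right cross_scale_right)
  have e_eq: "lvec (f e) = rcis (cmod (lvec (f e))) (\<psi> e)"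
    using angle_liftD(4)[OF lift] Z by simp
  have liftG: "angle_lift f \<psi> (set G)" and liftH: "angle_lift f \<psi> (set H)"
    using angle_lift_subset[OF lift] Z by auto
  from insert_halfturn_cases[OF assms] show ?thesis
  proof
    assume "\<forall>h\<in>set H. \<psi> h \<le> \<psi> e + pi"
    moreover have "\<psi> e \<le> \<psi> h" if "h \<in> set H" for h
      using sorted that Z by (auto simp: sorted_append)
    ultimately show ?thesis
      by (subst e_eq, intro cross_rcis_comp_list_nonneg[OF liftH]) auto
  next
    assume G: "(\<forall>g\<in>set G. \<psi> e - pi \<le> \<psi> g) \<and> cross (lvec (f e)) (lvec_list f (G @ H)) \<ge> 0"
    moreover have "\<psi> g \<le> \<psi> e" if "g \<in> set G" for g
      using sorted that Z by (auto simp: sorted_append)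
    ultimately have "cross (lvec_list f G) (rcis (cmod (lvec (f e))) (\<psi> e)) \<ge> 0"
      by (intro cross_comp_list_rcis_nonneg[OF liftG]) auto
    then have "a * cross (lvec (f e)) (lvec_list f G) \<le> 0"
      using e_eq cross_antisym[of "lvec (f e)"] \<open>a > 0\<close> by (simp add: mult_nonneg_nonpos)
    then show ?thesis
      using cross_eq G by linarith
  qed
qed

section \<open>Rotations and insertions\<close>

lemma ex_rotate_rotate_eq: "\<exists>k'. rotate k' (rotate j xs) = rotate k xs"
proof (cases "xs = []")
  case False
  have "(length xs - 1) * j + k + j = k + j * length xs"
    using False by (cases "length xs") (simp_all add: algebra_simps)
  then have "rotate ((length xs - 1) * j + k) (rotate j xs) = rotate (k + j * length xs) xs"
    by (metis rotate_rotate)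
  also have "\<dots> = rotate k xs"
    by (metis mod_mult_self1 rotate_conv_mod)
  finally show ?thesis by blast
qed simp

lemma cyclically_sorted_rotate: "cyclically_sorted f xs \<Longrightarrow> cyclically_sorted f (rotate j xs)"
  unfolding cyclically_sorted_def by (metis ex_rotate_rotate_eq)

lemma ex_filter_rotate: "\<exists>k'. filter P (rotate k xs) = rotate k' (filter P xs)"
proof -
  define m where "m = k mod length xs"
  have "filter P (rotate k xs) = filter P (drop m xs) @ filter P (take m xs)"
    by (simp add: rotate_drop_take m_def)
  moreover have "filter P xs = filter P (take m xs) @ filter P (drop m xs)"
    by (metis append_take_drop_id filter_append)
  ultimately show ?thesis by (metis rotate_append)
qed

lemma cyclically_sorted_filter: "cyclically_sorted f xs \<Longrightarrow> cyclically_sorted f (filter P xs)"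
  unfolding cyclically_sorted_def by (metis ex_filter_rotate sorted_filter)

lemma rotate_insert_split:
  assumes "xs = A @ B" "xs' = A @ e # B"
  shows "\<exists>G H k'. rotate k xs = G @ H \<and> rotate k' xs' = G @ e # H"
proof (cases "xs = []")
  case True
  then show ?thesis using assms by (intro exI[of _ "[]"] exI[of _ "[]"] exI[of _ 0]) auto
next
  case False
  define m where "m = k mod length xs"
  have "m < length xs" using False by (simp add: m_def)
  have rot: "rotate k xs = drop m xs @ take m xs" by (simp add: rotate_drop_take m_def)
  show ?thesis
  proof (cases "m \<le> length A")
    case True
    then have "rotate m xs' = drop m A @ e # B @ take m A"
      using \<open>m < length xs\<close> assms by (simp add: rotate_drop_take)
    then show ?thesis
      using rot True assms by (intro exI[of _ "drop m A"] exI[of _ "B @ take m A"] exI[of _ m]) simp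
  next
    case False
    define m' where "m' = m - length A"
    have "rotate (m + 1) xs' = drop m' B @ A @ e # take m' B"
      using False \<open>m < length xs\<close> assms by (simp add: rotate_drop_take m'_def Suc_diff_le)
    moreover have "rotate k xs = drop m' B @ A @ take m' B"
      using rot False assms by (simp add: m'_def)
    ultimately show ?thesis
      by (intro exI[of _ "drop m' B @ A"] exI[of _ "take m' B"] exI[of _ "m + 1"]) simp
  qed
qed

lemma ex_min_rotation:
  assumes "xs \<noteq> []"
  shows "\<exists>k. \<forall>j. snd (comp_list f (rotate k xs)) \<le> snd (comp_list f (rotate j xs))"
proof -
  define S where "S = (\<lambda>k. snd (comp_list f (rotate k xs))) ` {..<length xs}"
  have "finite S" "S \<noteq> {}" using assms by (auto simp: S_def)
  then have "Min S \<in> S" by (rule Min_in)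
  then obtain k where k: "snd (comp_list f (rotate k xs)) = Min S" by (auto simp: S_def)
  have "snd (comp_list f (rotate j xs)) \<in> S" for j
    using assms rotate_conv_mod[of j xs] by (auto simp: S_def)
  then show ?thesis
    using k \<open>finite S\<close> by (metis Min_le)
qed

lemma comp_list_rotate_parallel_prefix:
  assumes "i \<le> length t" "\<And>j. j < i \<Longrightarrow> ang f (t ! j) = polar_angle (lvec_list f t)"
  shows "comp_list f (rotate i t) = comp_list f t"
  using assms
proof (induction i)
  case (Suc i)
  define u where "u = rotate i t"
  have "t \<noteq> []" using Suc.prems(1) by auto
  then have "u \<noteq> []" "hd u = t ! i"
    using Suc.prems(1) hd_rotate_conv_nth[of t i] by (auto simp: u_def)
  have u_eq: "comp_list f u = comp_list f t"
    using Suc by (simp add: u_def)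
  have "cross (lvec (f (hd u))) (lvec_list f u) = 0"
  proof -
    have "lvec (f (hd u)) = rcis (cmod (lvec (f (hd u)))) (polar_angle (lvec_list f t))"
      using lvec_eq_rcis_ang[of f "hd u"] Suc.prems(2)[of i] \<open>hd u = t ! i\<close> by simp
    moreover have "lvec_list f u = rcis (cmod (lvec_list f t)) (polar_angle (lvec_list f t))"
      using u_eq by (simp add: rcis_cmod_polar_angle)
    ultimately show ?thesis
      using cross_rcis by (metis diff_self mult_zero_right sin_zero)
  qed
  then have "snd (comp_list f (rotate (Suc i) t)) = snd (comp_list f (rotate i t))"
    using snd_comp_list_rotate1_diff[OF \<open>u \<noteq> []\<close>, of f] by (simp add: u_def rotate_rotate)
  then show ?case
    using comp_list_rotate_eq_of_snd_eq u_eq by (metis u_def)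
qed simp

lemma ex_min_rotation_with_gap:
  assumes "xs \<noteq> []"
  shows "\<exists>k. (\<forall>j. snd (comp_list f (rotate k xs)) \<le> snd (comp_list f (rotate j xs))) \<and>
      (ang f (hd (rotate k xs)) \<noteq> polar_angle (lvec_list f (rotate k xs))
       \<or> (\<forall>x\<in>set xs. ang f x = polar_angle (lvec_list f (rotate k xs))))"
proof -
  obtain k where k: "\<forall>j. snd (comp_list f (rotate k xs)) \<le> snd (comp_list f (rotate j xs))"
    using ex_min_rotation[OF assms] by blast
  define t where "t = rotate k xs"
  define \<alpha> where "\<alpha> = polar_angle (lvec_list f t)"
  show ?thesis
  proof (cases "\<forall>x\<in>set xs. ang f x = \<alpha>")
    case True
    then show ?thesis using k by (auto simp: t_def \<alpha>_def)
  next
    case False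
    then have "\<exists>x\<in>set t. ang f x \<noteq> \<alpha>" by (simp add: t_def)
    then have "\<exists>j. j < length t \<and> ang f (t ! j) \<noteq> \<alpha>"
      by (metis in_set_conv_nth)
    define i where "i = (LEAST j. j < length t \<and> ang f (t ! j) \<noteq> \<alpha>)"
    have i: "i < length t" "ang f (t ! i) \<noteq> \<alpha>"
      using LeastI_ex[OF \<open>\<exists>j. _\<close>] by (auto simp: i_def)
    have "ang f (t ! j) = \<alpha>" if "j < i" for j
      using not_less_Least[of j "\<lambda>j. j < length t \<and> ang f (t ! j) \<noteq> \<alpha>"] that i(1)
      by (auto simp: i_def)
    then have same: "comp_list f (rotate (i + k) xs) = comp_list f t"
      using comp_list_rotate_parallel_prefix[of i t f] i(1)
      by (simp add: t_def \<alpha>_def rotate_rotate)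
    have "hd (rotate (i + k) xs) = t ! i"
      using i(1) assms by (simp add: t_def hd_rotate_conv_nth flip: rotate_rotate)
    then show ?thesis
      using same k i(2) by (intro exI[of _ "i + k"]) (simp add: t_def \<alpha>_def)
  qed
qed

lemma snd_comp_list_swap_parallel:
  assumes "\<And>x. x \<in> set (G @ H) \<Longrightarrow> ang f x = \<beta> \<and> fst (f x) > 0"
  shows "snd (comp_list f (H @ G)) = snd (comp_list f (G @ H))"
proof -
  have "\<exists>s. lvec_list f X = rcis s \<beta>" if X: "set X \<subseteq> set (G @ H)" for X
  proof (rule lvec_comp_list_parallel)
    fix x assume "x \<in> set X"
    then show "lvec (f x) = rcis (cmod (lvec (f x))) \<beta> \<and> fst (f x) > 0"
      using X assms[of x] lvec_eq_rcis_ang[of f x] by auto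
  qed
  then obtain sG sH where "lvec_list f G = rcis sG \<beta>" "lvec_list f H = rcis sH \<beta>"
    by (metis set_append sup_ge1 sup_ge2)
  then show ?thesis
    using snd_comp_list_swap_diff[of f H G] by (simp add: cross_rcis)
qed

lemma insert_into_min_rotation:
  assumes Z: "distinct (G @ e # H)" "cyclically_sorted f (G @ e # H)"
    and pos: "\<And>x. x \<in> set (G @ e # H) \<Longrightarrow> fst (f x) > 0 \<and> lvec (f x) \<noteq> 0"
    and min: "\<And>j. snd (comp_list f (G @ H)) \<le> snd (comp_list f (rotate j (G @ H)))"
    and gap: "ang f (hd (G @ H)) \<noteq> polar_angle (lvec_list f (G @ H))
       \<or> (\<forall>x\<in>set (G @ H). ang f x = polar_angle (lvec_list f (G @ H)))"
  shows "\<exists>k. snd (comp_list f (rotate k (G @ e # H))) \<le> snd (comp_list f (G @ H @ [e]))"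
proof -
  consider "H = []" | "G = []"
    | "G \<noteq> []" "H \<noteq> []" "\<forall>x\<in>set (G @ H). ang f x = polar_angle (lvec_list f (G @ H))"
    | "G \<noteq> []" "H \<noteq> []" "ang f (hd (G @ H)) \<noteq> polar_angle (lvec_list f (G @ H))"
    using gap by blast
  then show ?thesis
  proof cases
    case 1
    then show ?thesis by (intro exI[of _ 0]) simp
  next
    case 2
    then have "rotate 1 (G @ e # H) = G @ H @ [e]" by simp
    then show ?thesis by (metis order_refl)
  next
    case 3
    have rot: "rotate (Suc (length G)) (G @ e # H) = (H @ G) @ [e]"
      using rotate_append[of "G @ [e]" H] by simp
    have "snd (comp_list f (H @ G)) = snd (comp_list f (G @ H))"
      using 3(3) pos by (intro snd_comp_list_swap_parallel) auto
    then have "snd (comp_list f (rotate (Suc (length G)) (G @ e # H)))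
        = snd (comp_list f ((G @ H) @ [e]))"
      unfolding rot by (simp only: snd_comp_list_snoc)
    then show ?thesis by (metis append_assoc order_refl)
  next
    case 4
    obtain \<psi> where lift: "angle_lift f \<psi> (set (G @ e # H))" "sorted (map \<psi> (G @ e # H))"
      "\<psi> (last (G @ e # H)) \<le> \<psi> (hd (G @ e # H)) + 2 * pi"
      using ex_angle_lift_of_cyclically_sorted[OF Z pos] by auto
    have ends: "hd (G @ e # H) = hd (G @ H)" "last (G @ e # H) = last (G @ H)"
      using 4 by auto
    have "fst (f (last (G @ H))) > 0"
      using pos 4(2) by simp
    then have "cross (lvec (f (hd (G @ H)))) (lvec_list f (G @ H)) \<ge> 0"
      "cross (lvec_list f (G @ H)) (lvec (f (last (G @ H)))) \<ge> 0"
      using 4(1) cross_hd_nonneg_of_le_rotate1[OF _ min[of 1]]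
        cross_last_nonneg_of_le_rotate_last[OF _ _ min[of "length (G @ H) - 1"]] by auto
    then have "cross (lvec (f e)) (lvec_list f H) \<ge> 0"
      using 4(3) ends by (intro cross_insert_suffix_nonneg[OF refl lift(2,3,1)]) auto
    then show ?thesis
      by (intro exI[of _ 0]) (simp add: snd_comp_list_insert_le)
  qed
qed

lemma insertion_step:
  assumes L: "distinct L" "cyclically_sorted f L"
    and pos: "\<And>x. x \<in> set L \<Longrightarrow> fst (f x) > 0 \<and> lvec (f x) \<noteq> 0"
    and e: "e \<in> set L" "e \<notin> U"
  shows "\<exists>k'. \<forall>k. snd (comp_list f (rotate k' (filter (\<lambda>x. x \<in> insert e U) L)))
            \<le> fst (f e) * snd (comp_list f (rotate k (filter (\<lambda>x. x \<in> U) L))) + snd (f e)"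
proof -
  define xs where "xs = filter (\<lambda>x. x \<in> U) L"
  define xs' where "xs' = filter (\<lambda>x. x \<in> insert e U) L"
  obtain L1 L2 where L12: "L = L1 @ e # L2" using e(1) by (metis split_list)
  then have "e \<notin> set L1" "e \<notin> set L2" using L(1) by auto
  moreover have "filter (\<lambda>x. x = e \<or> x \<in> U) M = filter (\<lambda>x. x \<in> U) M" if "e \<notin> set M" for M
    using that by (intro filter_cong) auto
  ultimately have xs: "xs = filter (\<lambda>x. x \<in> U) L1 @ filter (\<lambda>x. x \<in> U) L2"
    and xs': "xs' = filter (\<lambda>x. x \<in> U) L1 @ e # filter (\<lambda>x. x \<in> U) L2"
    using e(2) by (simp_all add: xs_def xs'_def L12)
  show ?thesis
  proof (cases "xs = []")
    case True
    then show ?thesis using xs xs' by (intro exI[of _ 0]) (simp add: xs_def xs'_def)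
  next
    case False
    obtain k1 where k1: "\<forall>j. snd (comp_list f (rotate k1 xs)) \<le> snd (comp_list f (rotate j xs))"
      and gap: "ang f (hd (rotate k1 xs)) \<noteq> polar_angle (lvec_list f (rotate k1 xs))
         \<or> (\<forall>x\<in>set xs. ang f x = polar_angle (lvec_list f (rotate k1 xs)))"
      using ex_min_rotation_with_gap[OF False] by blast
    obtain G H k2 where GH: "rotate k1 xs = G @ H" and k2: "rotate k2 xs' = G @ e # H"
      using rotate_insert_split[OF xs xs', of k1] by blast
    have "snd (comp_list f (G @ H)) \<le> snd (comp_list f (rotate j (G @ H)))" for j
      using k1 GH by (metis rotate_rotate)
    moreover have "distinct (G @ e # H)" "cyclically_sorted f (G @ e # H)"
      "\<And>x. x \<in> set (G @ e # H) \<Longrightarrow> fst (f x) > 0 \<and> lvec (f x) \<noteq> 0"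
      using L pos k2[symmetric]
      by (auto simp: xs'_def cyclically_sorted_rotate cyclically_sorted_filter)
    ultimately obtain k where
      k: "snd (comp_list f (rotate k (G @ e # H))) \<le> snd (comp_list f (G @ H @ [e]))"
      using insert_into_min_rotation[of G e H f] gap GH by (metis set_rotate)
    have "snd (comp_list f (rotate (k + k2) xs'))
        \<le> fst (f e) * snd (comp_list f (rotate j xs)) + snd (f e)" for j
    proof -
      have "snd (comp_list f (rotate (k + k2) xs'))
          \<le> fst (f e) * snd (comp_list f (G @ H)) + snd (f e)"
        using k k2 snd_comp_list_snoc[of f "G @ H" e] by (simp add: rotate_rotate[symmetric])
      also have "\<dots> \<le> fst (f e) * snd (comp_list f (rotate j xs)) + snd (f e)"
        using k1 GH pos e(1) by (metis add_le_cancel_right less_imp_le mult_left_mono)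
      finally show ?thesis .
    qed
    then show ?thesis by (auto simp: xs_def xs'_def)
  qed
qed

lemma rotation_of_filter_le:
  assumes L: "distinct L" "cyclically_sorted f L"
    and pos: "\<And>x. x \<in> set L \<Longrightarrow> fst (f x) > 0 \<and> lvec (f x) \<noteq> 0"
  shows "distinct ys \<Longrightarrow> set ys \<subseteq> set L \<Longrightarrow>
    \<exists>k. snd (comp_list f (rotate k (filter (\<lambda>x. x \<in> set ys) L))) \<le> snd (comp_list f ys)"
proof (induction ys rule: rev_induct)
  case Nil
  then show ?case by (intro exI[of _ 0]) simp
next
  case (snoc x ys)
  then have x: "x \<in> set L" "x \<notin> set ys" by auto
  obtain k where
    k: "snd (comp_list f (rotate k (filter (\<lambda>x. x \<in> set ys) L))) \<le> snd (comp_list f ys)"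
    using snoc by auto
  obtain k' where k': "\<forall>k. snd (comp_list f (rotate k' (filter (\<lambda>y. y \<in> insert x (set ys)) L)))
      \<le> fst (f x) * snd (comp_list f (rotate k (filter (\<lambda>y. y \<in> set ys) L))) + snd (f x)"
    using insertion_step[OF L pos x] by blast
  have "fst (f x) * snd (comp_list f (rotate k (filter (\<lambda>y. y \<in> set ys) L)))
      \<le> fst (f x) * snd (comp_list f ys)"
    using k pos[OF x(1)] by (simp add: mult_left_mono)
  then show ?case
    using k'[rule_format, of k] by (intro exI[of _ k']) (simp add: snd_comp_list_snoc)
qed

lemma snd_comp_list_le_rotate:
  assumes L: "distinct L" "cyclically_sorted f L" "L \<noteq> []"
    and pos: "\<And>x. x \<in> set L \<Longrightarrow> fst (f x) > 0 \<and> lvec (f x) \<noteq> 0"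
    and rot1: "snd (comp_list f L) \<le> snd (comp_list f (rotate 1 L))"
    and rot_last: "snd (comp_list f L) \<le> snd (comp_list f (rotate (length L - 1) L))"
    and gap: "lvec_list f L = 0 \<or> ang f (hd L) \<noteq> polar_angle (lvec_list f L)"
  shows "snd (comp_list f L) \<le> snd (comp_list f (rotate k L))"
proof -
  obtain \<psi> where lift: "angle_lift f \<psi> (set L)" "sorted (map \<psi> L)" "\<psi> (last L) \<le> \<psi> (hd L) + 2 * pi"
    using ex_angle_lift_of_cyclically_sorted[OF L(1,2) pos] L(3) by blast
  have "cross (lvec (f (hd L))) (lvec_list f L) \<ge> 0"
    using cross_hd_nonneg_of_le_rotate1[OF L(3) rot1] .
  moreover have "cross (lvec_list f L) (lvec (f (last L))) \<ge> 0"
    using cross_last_nonneg_of_le_rotate_last[OF L(3) _ rot_last] pos L(3) by simp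
  moreover define m where "m = k mod length L"
  ultimately have "cross (lvec_list f (take m L)) (lvec_list f (drop m L)) \<ge> 0"
    using lift gap L(3) by (intro cross_comp_list_split_nonneg) auto
  then show ?thesis
    using snd_comp_list_swap_diff[of f "drop m L" "take m L"]
    by (simp add: rotate_drop_take m_def)
qed

lemma comp_list_minimum:
  assumes L: "distinct L" "cyclically_sorted f L" "L \<noteq> []"
    and pos: "\<And>x. x \<in> set L \<Longrightarrow> fst (f x) > 0 \<and> lvec (f x) \<noteq> 0"
    and rot1: "snd (comp_list f L) \<le> snd (comp_list f (rotate 1 L))"
    and rot_last: "snd (comp_list f L) \<le> snd (comp_list f (rotate (length L - 1) L))"
    and gap: "lvec_list f L = 0 \<or> ang f (hd L) \<noteq> polar_angle (lvec_list f L)"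
    and ys: "distinct ys" "set ys = set L"
  shows "lin_le (comp_list f L) (comp_list f ys)"
proof -
  obtain k where "snd (comp_list f (rotate k L)) \<le> snd (comp_list f ys)"
    using rotation_of_filter_le[OF L(1,2) pos ys(1)] ys(2) by auto
  then have "snd (comp_list f L) \<le> snd (comp_list f ys)"
    using snd_comp_list_le_rotate[OF L pos rot1 rot_last gap, of k] by simp
  moreover have "fst (comp_list f L) = fst (comp_list f ys)"
    using L(1) ys by (intro fst_comp_list_mset_eq) (simp add: set_eq_iff_mset_eq_distinct)
  ultimately show ?thesis
    by (simp add: lin_le_def lapp_def)
qed

section \<open>Permutations as lists\<close>

lemma compose_perm_eq_comp_list: "compose_perm f \<rho> m = comp_list f (map \<rho> [1..<Suc m])"
  by (induction m) (simp_all add: comp_list_snoc)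

lemma kshift_eq_rotate:
  assumes "k \<le> n"
  shows "map (kshift n \<sigma> k) [1..<Suc n] = rotate k (map \<sigma> [1..<Suc n])"
proof (rule nth_equalityI)
  fix i assume "i < length (map (kshift n \<sigma> k) [1..<Suc n])"
  then have i: "i < n" by (simp del: upt_Suc)
  have "(k + i) mod n = (if Suc i \<le> n - k then k + i else k + i - n)"
    using i assms by (auto simp: le_mod_geq)
  then show "map (kshift n \<sigma> k) [1..<Suc n] ! i = rotate k (map \<sigma> [1..<Suc n]) ! i"
    using i assms by (auto simp: nth_rotate kshift_def add.commute Suc_diff_le simp del: upt_Suc)
qed (simp del: upt_Suc)

lemma permutes_upt_list:
  assumes "\<rho> permutes {1..n}"
  shows "distinct (map \<rho> [1..<Suc n])" "set (map \<rho> [1..<Suc n]) = {1..n}"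
  using permutes_inj_on[OF assms] permutes_image[OF assms]
  by (simp_all add: distinct_map atLeastLessThanSuc_atLeastAtMost del: upt_Suc)

lemma cyclically_sorted_of_counterclockwise:
  assumes "counterclockwise n f \<sigma>"
  shows "cyclically_sorted f (map \<sigma> [1..<Suc n])"
proof -
  obtain k where k: "k \<in> {1..n}" and sorted: "\<forall>i j. 1 \<le> i \<longrightarrow> i \<le> j \<longrightarrow> j \<le> n \<longrightarrow>
      ang f (kshift n \<sigma> (k - 1) i) \<le> ang f (kshift n \<sigma> (k - 1) j)"
    using assms unfolding counterclockwise_def ang_def by blast
  have "sorted (map (ang f) (map (kshift n \<sigma> (k - 1)) [1..<Suc n]))"
    using sorted by (auto simp: sorted_iff_nth_mono simp del: upt_Suc)
  moreover have "map (kshift n \<sigma> (k - 1)) [1..<Suc n] = rotate (k - 1) (map \<sigma> [1..<Suc n])"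
    using k by (intro kshift_eq_rotate) auto
  ultimately show ?thesis
    unfolding cyclically_sorted_def by metis
qed

lemma snd_comp_list_le_rotate_of_lin_le_kshift:
  assumes "lin_le (compose_perm f \<sigma> n) (compose_perm f (kshift n \<sigma> k) n)" "k \<le> n"
  shows "snd (comp_list f (map \<sigma> [1..<Suc n])) \<le> snd (comp_list f (rotate k (map \<sigma> [1..<Suc n])))"
  using assms(1) kshift_eq_rotate[OF assms(2)]
  by (auto simp: lin_le_def lapp_def compose_perm_eq_comp_list dest: spec[of _ 0])

theorem mainTheorem14:
  fixes n :: nat and f :: "nat \<Rightarrow> linfun" and \<sigma> :: "nat \<Rightarrow> nat"
  assumes mono: "\<And>i. i \<in> {1..n} \<Longrightarrow> monotone_lin (f i)"
    and nonid: "\<And>i. i \<in> {1..n} \<Longrightarrow> \<not> identical_lin (f i)"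
    and perm: "\<sigma> permutes {1..n}"
    and ccw: "counterclockwise n f \<sigma>"
    and le1: "lin_le (compose_perm f \<sigma> n) (compose_perm f (kshift n \<sigma> 1) n)"
    and le2: "lin_le (compose_perm f \<sigma> n) (compose_perm f (kshift n \<sigma> (n - 1)) n)"
    and ang: "theta (f (\<sigma> 1)) \<noteq> theta (compose_perm f \<sigma> n)"
  shows "minimum_perm n f \<sigma>"
proof -
  define L where "L = map \<sigma> [1..<Suc n]"
  have n: "n \<ge> 1" using ccw by (auto simp: counterclockwise_def)
  have L: "distinct L" "set L = {1..n}" "length L = n"
    using permutes_upt_list[OF perm] by (simp_all add: L_def)
  have L_hd: "L \<noteq> []" "hd L = \<sigma> 1"
    using n by (simp_all add: L_def upt_rec)
  have pos: "fst (f x) > 0 \<and> lvec (f x) \<noteq> 0" if "x \<in> set L" for x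
    using mono nonid that L(2) by (simp add: monotone_lin_def lvec_eq_0_iff)
  have "lvec (f (hd L)) \<noteq> 0" using pos L_hd(1) by simp
  then have gap: "lvec_list f L = 0 \<or> ang f (hd L) \<noteq> polar_angle (lvec_list f L)"
    using ang L_hd(2) by (auto simp: theta_def ang_def compose_perm_eq_comp_list L_def)
  show ?thesis
    unfolding minimum_perm_def compose_perm_eq_comp_list
  proof (intro allI impI)
    fix \<rho> assume "\<rho> permutes {1..n}"
    then show "lin_le (comp_list f (map \<sigma> [1..<Suc n])) (comp_list f (map \<rho> [1..<Suc n]))"
      using comp_list_minimum[OF L(1) cyclically_sorted_of_counterclockwise[OF ccw, folded L_def]
          L_hd(1) pos snd_comp_list_le_rotate_of_lin_le_kshift[OF le1 n, folded L_def]
          snd_comp_list_le_rotate_of_lin_le_kshift[OF le2 diff_le_self, folded L_def L(3)] gap]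
        permutes_upt_list L(2)
      by (simp add: L_def)
  qed
qed

end
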